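(* Let $k$ be a positive integer such that $k+1$ is an odd prime, and let $p>k^2+k$ be an odd prime. Let $(u_1,\ldots,u_k)\in\mathbb{Z}_{>0}^k$ satisfy $\gcd(u_1,\ldots,u_k)=1$ and $u_i\equiv i\pmod p$ for all $i=1,\ldots,k$. Then there is a real number $t$ with $\lVert t u_i\rVert\ge\frac1{k+1}$ for all $i=1,\ldots,k$.
   Context: For $x\in\mathbb{R}$, $\lVert x\rVert$ denotes the distance from $x$ to the nearest integer. *)

theory Defs
  imports Complex_Main "HOL-Number_Theory.Cong"
begin

definition dist_int :: "real \<Rightarrow> real" where
  "dist_int x = \<bar>x - of_int (round x)\<bar>"

end

theory Submission
  imports Defs "HOL-Number_Theory.Number_Theory" "HOL-Computational_Algebra.Polynomial"
begin

(* Let P = k + 1.  If P divides no u i, then t = 1 / P works.  Otherwise, as the u i are coprime,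
   P divides some u i but not some u j, and there are X, D with X u i + D i \<noteq> 0, -1 (mod P)
   for all i.  Indeed, if not, then for each residue d the factors u i + d i either include 0
   or run through all nonzero residues (were v missed, X = -1/v and D = X d would work), so
   their product is 0 or, by Wilson, -1 (mod P).  Summing this polynomial of degree P - 1 in d
   over all residues gives -(P - 1)! = 1 (mod P), because the power sums of degree below P - 1
   vanish; so the number of d giving 0 is 1 (mod P), yet d = 0 and d = -u j / j are two of
   them.  Finally t = ((X + D) p + c) / (p P) with c = -D p (mod P), 1 \<le> c \<le> P, gives
   t u i - m = (p G + c i) / (p P) with G = X u i + D i (mod P); since G \<noteq> 0, -1 and
   0 < c i < p, this is at least 1 / P in absolute value. *)

lemma fact_eq_prod_int_interval:
  assumes "0 < n"
  shows "fact (n - 1) = (\<Prod>x\<in>{1..<int n}. x)"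
proof -
  have "(\<Prod>x\<in>{1..<int n}. x) = (\<Prod>x\<in>int ` {1..<n}. x)"
    by (simp add: image_int_atLeastLessThan)
  also have "\<dots> = fact (n - 1)"
    using assms by (subst prod.reindex) (auto simp: fact_prod atLeastLessThanSuc_atLeastAtMost[symmetric])
  finally show ?thesis ..
qed

lemma sum_powers_mod_prime_eq_0:
  fixes P n :: nat
  assumes "prime P" "0 < n" "n < P - 1"
  shows "[(\<Sum>x\<in>{1..<int P}. x ^ n) = 0] (mod int P)"
proof (rule ccontr)
  define S where "S = (\<Sum>x\<in>{1..<int P}. x ^ n)"
  assume "\<not> [S = 0] (mod int P)"
  then have "coprime S (int P)"
    using assms(1) prime_imp_coprime[of "int P" S] by (simp add: cong_0_iff coprime_commute)
  obtain g where g: "residue_primroot P g"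
    using prime_primitive_root_exists assms(1) prime_gt_1_nat by blast
  then have "coprime (int g) (int P)"
    by (simp add: residue_primroot_def coprime_commute)
  then have "S = (\<Sum>x\<in>{1..<int P}. (int g * x mod int P) ^ n)"
    using sum.reindex_bij_betw[OF bij_betw_int_remainders_mult, of "int g" "int P" "\<lambda>x. x ^ n"]
    by (simp add: S_def)
  also have "[\<dots> = (\<Sum>x\<in>{1..<int P}. (int g * x) ^ n)] (mod int P)"
    by (intro cong_sum cong_pow) (simp add: cong_def)
  also have "(\<Sum>x\<in>{1..<int P}. (int g * x) ^ n) = int g ^ n * S"
    by (simp add: S_def power_mult_distrib sum_distrib_left)
  finally have "[1 * S = int g ^ n * S] (mod int P)"
    by simp
  then have "[int (g ^ n) = int 1] (mod int P)"
    using \<open>coprime S (int P)\<close> by (metis cong_mult_rcancel cong_sym mult_1 of_nat_1 of_nat_power)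
  then have "[g ^ n = 1] (mod P)"
    by (simp only: cong_int_iff)
  moreover have "ord P g = P - 1"
    using g assms(1) by (simp add: residue_primroot_def totient_prime)
  ultimately show False
    using ord_minimal[of n P g] assms(2,3) by simp
qed

lemma sum_powers_mod_prime:
  fixes P n :: nat
  assumes "prime P" "n \<le> P - 1"
  shows "[(\<Sum>x\<in>{0..<int P}. x ^ n) = (if n = P - 1 then -1 else 0)] (mod int P)"
proof -
  have P: "1 < P"
    using assms(1) prime_gt_1_nat by blast
  have split: "{0..<int P} = insert 0 {1..<int P}"
    using P by auto
  consider "n = P - 1" | "n = 0" "n \<noteq> P - 1" | "0 < n" "n < P - 1"
    using assms(2) by linarith
  then show ?thesis
  proof cases
    case 1
    have "[x ^ n = 1] (mod int P)" if "x \<in> {1..<int P}" for x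
    proof -
      have "\<not> P dvd nat x"
        using that by (auto dest: dvd_imp_le)
      then have "[nat x ^ n = 1] (mod P)"
        using fermat_theorem[OF assms(1)] 1 by blast
      then have "[int (nat x ^ n) = int 1] (mod int P)"
        by (simp only: cong_int_iff)
      then show ?thesis
        using that by simp
    qed
    then have "[(\<Sum>x\<in>{1..<int P}. x ^ n) = (\<Sum>x\<in>{1..<int P}. 1)] (mod int P)"
      by (rule cong_sum)
    also have "(\<Sum>x\<in>{1..<int P}. 1) = int P - 1"
      using P by simp
    also have "[int P - 1 = -1] (mod int P)"
      by (simp add: cong_iff_dvd_diff)
    finally show ?thesis
      using 1 P by (simp add: split power_0_left)
  next
    case 2
    then show ?thesis
      by (simp add: cong_0_iff)
  next
    case 3
    then show ?thesis
      using sum_powers_mod_prime_eq_0[OF assms(1) 3] by (simp add: split power_0_left)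
  qed
qed

lemma sum_poly_mod_prime:
  fixes P :: nat and f :: "int poly"
  assumes "prime P" "degree f \<le> P - 1"
  shows "[(\<Sum>x\<in>{0..<int P}. poly f x) = - coeff f (P - 1)] (mod int P)"
proof -
  have "poly f x = (\<Sum>i\<le>P - 1. coeff f i * x ^ i)" for x
    by (subst poly_as_sum_of_monoms'[OF assms(2), symmetric]) (simp add: poly_sum poly_monom)
  then have "(\<Sum>x\<in>{0..<int P}. poly f x) = (\<Sum>i\<le>P - 1. coeff f i * (\<Sum>x\<in>{0..<int P}. x ^ i))"
    by (simp add: sum_distrib_left) (rule sum.swap)
  also have "[\<dots> = (\<Sum>i\<le>P - 1. coeff f i * (if i = P - 1 then -1 else 0))] (mod int P)"
    by (intro cong_sum cong_mult cong_refl sum_powers_mod_prime[OF assms(1)]) simp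
  also have "(\<Sum>i\<le>P - 1. coeff f i * (if i = P - 1 then -1 else 0)) = - coeff f (P - 1)"
    by (simp add: if_distrib[of "\<lambda>y. _ * y"] cong: if_cong)
  finally show ?thesis .
qed

lemma sum_prod_affine_mod_prime:
  fixes P :: nat and w :: "nat \<Rightarrow> int"
  assumes "prime P"
  shows "[(\<Sum>d\<in>{0..<int P}. \<Prod>i=1..P - 1. w i + d * int i) = 1] (mod int P)"
proof -
  define F where "F = (\<Prod>i=1..P - 1. [:w i, int i:])"
  have degree: "degree F = P - 1"
    unfolding F_def by (simp add: degree_prod_eq_sum_degree)
  then have "coeff F (P - 1) = lead_coeff F"
    by simp
  also have "\<dots> = (\<Prod>i=1..P - 1. lead_coeff [:w i, int i:])"
    unfolding F_def by (rule lead_coeff_prod)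
  also have "\<dots> = fact (P - 1)"
    by (simp add: fact_prod)
  finally have "[- coeff F (P - 1) = 1] (mod int P)"
    using wilson_theorem[OF assms] cong_minus_minus_iff by fastforce
  moreover have "poly F d = (\<Prod>i=1..P - 1. w i + d * int i)" for d
    unfolding F_def by (simp add: poly_prod mult.commute)
  ultimately show ?thesis
    using sum_poly_mod_prime[OF assms, of F] degree cong_trans by simp
qed

lemma prod_cong_minus_1_if_residues_covered:
  fixes P :: nat and v :: "nat \<Rightarrow> int"
  assumes "prime P" and covered: "\<forall>r\<in>{1..<int P}. \<exists>i\<in>{1..P - 1}. [v i = r] (mod int P)"
  shows "[(\<Prod>i=1..P - 1. v i) = -1] (mod int P)"
proof -
  define f where "f i = v i mod int P" for i
  have "{1..<int P} \<subseteq> f ` {1..P - 1}"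
  proof
    fix r assume r: "r \<in> {1..<int P}"
    then obtain i where "i \<in> {1..P - 1}" "[v i = r] (mod int P)"
      using covered by blast
    then show "r \<in> f ` {1..P - 1}"
      using r by (auto simp: f_def cong_def)
  qed
  moreover have "card (f ` {1..P - 1}) \<le> card {1..<int P}"
    using card_image_le[of "{1..P - 1}" f] by simp
  ultimately have image: "f ` {1..P - 1} = {1..<int P}"
    by (intro card_seteq[symmetric]) auto
  then have "inj_on f {1..P - 1}"
    by (intro eq_card_imp_inj_on) simp_all
  have "[(\<Prod>i=1..P - 1. v i) = (\<Prod>i=1..P - 1. f i)] (mod int P)"
    by (intro cong_prod) (simp add: f_def cong_def)
  also have "(\<Prod>i=1..P - 1. f i) = (\<Prod>x\<in>{1..<int P}. x)"
    using prod.reindex[OF \<open>inj_on f {1..P - 1}\<close>, of id] image by simp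
  also have "\<dots> = fact (P - 1)"
    using fact_eq_prod_int_interval[OF prime_gt_0_nat[OF assms(1)]] by simp
  also have "[\<dots> = -1] (mod int P)"
    by (rule wilson_theorem[OF assms(1)])
  finally show ?thesis .
qed

lemma residues_covered_if_scalings_hit_0_or_minus_1:
  fixes P :: nat and v :: "nat \<Rightarrow> int"
  assumes "prime P"
    and nonzero: "\<forall>i\<in>{1..P - 1}. \<not> int P dvd v i"
    and hit: "\<forall>X. \<exists>i\<in>{1..P - 1}. [X * v i = 0] (mod int P) \<or> [X * v i = -1] (mod int P)"
  shows "\<forall>r\<in>{1..<int P}. \<exists>i\<in>{1..P - 1}. [v i = r] (mod int P)"
proof
  fix r assume r: "r \<in> {1..<int P}"
  have prime: "prime (int P)"
    using assms(1) by simp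
  have "\<not> int P dvd r"
    using r by (auto dest: zdvd_imp_le)
  then have "coprime r (int P)"
    using prime prime_imp_coprime[of "int P" r] by (simp add: coprime_commute)
  then obtain X' where "[r * X' = 1] (mod int P)"
    using cong_solve_coprime_int by blast
  then have X: "[- X' * r = -1] (mod int P)"
    using cong_minus_minus_iff by (fastforce simp: mult.commute)
  have "\<not> int P dvd - X'"
  proof
    assume "int P dvd - X'"
    then have "[- X' * r = 0] (mod int P)"
      by (simp add: cong_0_iff)
    then have "[-1 = 0] (mod int P)"
      using X cong_sym cong_trans by blast
    then have "int P dvd 1"
      by (simp add: cong_0_iff)
    then show False
      using prime by (simp add: prime_int_iff)
  qed
  then have coprime: "coprime (- X') (int P)"
    using prime prime_imp_coprime[of "int P" "- X'"] by (simp add: coprime_commute)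
  obtain i where i: "i \<in> {1..P - 1}"
    and "[- X' * v i = 0] (mod int P) \<or> [- X' * v i = -1] (mod int P)"
    using hit by blast
  moreover have "\<not> [- X' * v i = 0] (mod int P)"
    using \<open>\<not> int P dvd - X'\<close> nonzero i prime by (simp add: cong_0_iff prime_dvd_mult_iff)
  ultimately have "[- X' * v i = - X' * r] (mod int P)"
    using X cong_sym cong_trans by blast
  then show "\<exists>i\<in>{1..P - 1}. [v i = r] (mod int P)"
    using i coprime cong_mult_lcancel by blast
qed

definition affine_zeros :: "nat \<Rightarrow> (nat \<Rightarrow> int) \<Rightarrow> int set" where
  "affine_zeros P w = {d\<in>{0..<int P}. \<exists>i\<in>{1..P - 1}. [w i + d * int i = 0] (mod int P)}"

lemma affine_zeros_subset: "affine_zeros P w \<subseteq> {0..<int P}"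
  by (auto simp: affine_zeros_def)

lemma two_le_card_affine_zeros:
  fixes P :: nat and w :: "nat \<Rightarrow> int"
  assumes "prime P"
    and i: "i \<in> {1..P - 1}" "int P dvd w i"
    and j: "j \<in> {1..P - 1}" "\<not> int P dvd w j"
  shows "2 \<le> card (affine_zeros P w)"
proof -
  have "(0::int) \<in> {0..<int P}"
    using prime_gt_0_nat[OF assms(1)] by simp
  moreover have "[w i + 0 * int i = 0] (mod int P)"
    using i(2) by (simp add: cong_0_iff)
  ultimately have "0 \<in> affine_zeros P w"
    using i(1) unfolding affine_zeros_def by blast
  have "\<not> P dvd j"
    using j(1) by (auto dest: dvd_imp_le)
  then have "coprime P j"
    by (rule prime_imp_coprime[OF assms(1)])
  then have "coprime (int j) (int P)"
    by (simp add: coprime_commute)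
  then obtain y where y: "[int j * y = 1] (mod int P)"
    using cong_solve_coprime_int by blast
  define d where "d = (- w j * y) mod int P"
  have "[w j + d * int j = w j + (- w j * y) * int j] (mod int P)"
    unfolding d_def by (intro cong_add cong_mult cong_refl) (simp add: cong_def)
  also have "w j + (- w j * y) * int j = w j * (1 - int j * y)"
    by (simp add: algebra_simps)
  also have "[\<dots> = w j * 0] (mod int P)"
    using y by (intro cong_mult cong_refl) (simp add: cong_iff_dvd_diff dvd_diff_commute)
  finally have zero: "[w j + d * int j = 0] (mod int P)"
    by simp
  have "d \<in> {0..<int P}"
    using prime_gt_0_nat[OF assms(1)] by (simp add: d_def)
  then have "d \<in> affine_zeros P w"
    using zero j(1) unfolding affine_zeros_def by blast
  moreover have "d \<noteq> 0"
    using zero j(2) by (auto simp: cong_0_iff)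
  moreover have "finite (affine_zeros P w)"
    using affine_zeros_subset by (rule finite_subset) simp
  ultimately have "card {0, d} \<le> card (affine_zeros P w)"
    using \<open>0 \<in> affine_zeros P w\<close> by (intro card_mono) auto
  then show ?thesis
    using \<open>d \<noteq> 0\<close> by simp
qed

lemma card_affine_zeros_cong_1:
  fixes P :: nat and w :: "nat \<Rightarrow> int"
  assumes "prime P"
    and off_zeros: "\<And>d. d \<in> {0..<int P} - affine_zeros P w \<Longrightarrow>
      [(\<Prod>i=1..P - 1. w i + d * int i) = -1] (mod int P)"
  shows "[int (card (affine_zeros P w)) = 1] (mod int P)"
proof -
  let ?R = "affine_zeros P w"
  have "[(\<Prod>i=1..P - 1. w i + d * int i) = (if d \<in> ?R then 0 else -1)] (mod int P)"
    if d: "d \<in> {0..<int P}" for d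
  proof (cases "d \<in> ?R")
    case True
    then obtain i where "i \<in> {1..P - 1}" "int P dvd w i + d * int i"
      by (auto simp: affine_zeros_def cong_0_iff)
    then have "int P dvd (\<Prod>i=1..P - 1. w i + d * int i)"
      by (meson dvd_prodI dvd_trans finite_atLeastAtMost)
    then show ?thesis
      using True by (simp add: cong_0_iff)
  next
    case False
    then show ?thesis
      using d off_zeros by simp
  qed
  then have "[(\<Sum>d\<in>{0..<int P}. \<Prod>i=1..P - 1. w i + d * int i)
      = (\<Sum>d\<in>{0..<int P}. if d \<in> ?R then 0 else -1)] (mod int P)"
    by (rule cong_sum)
  also have "(\<Sum>d\<in>{0..<int P}. if d \<in> ?R then 0 else -1 :: int) = - int (card ({0..<int P} - ?R))"
    by (simp add: sum.If_cases Diff_eq)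
  also have "- int (card ({0..<int P} - ?R)) = int (card ?R) - int P"
    using affine_zeros_subset[of P w] card_mono[OF _ affine_zeros_subset[of P w]]
    by (simp add: card_Diff_subset finite_subset of_nat_diff)
  also have "[int (card ?R) - int P = int (card ?R)] (mod int P)"
    by (simp add: cong_iff_dvd_diff)
  finally show ?thesis
    using sum_prod_affine_mod_prime[OF assms(1)] cong_sym cong_trans by blast
qed

lemma exists_affine_combination_avoiding_0_and_minus_1:
  fixes P :: nat and w :: "nat \<Rightarrow> int"
  assumes "prime P"
    and "\<exists>i\<in>{1..P - 1}. int P dvd w i" "\<exists>j\<in>{1..P - 1}. \<not> int P dvd w j"
  shows "\<exists>X D. \<forall>i\<in>{1..P - 1}.
    \<not> [X * w i + D * int i = 0] (mod int P) \<and> \<not> [X * w i + D * int i = -1] (mod int P)"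
proof (rule ccontr)
  assume no_avoiding: "\<not> ?thesis"
  have "[(\<Prod>i=1..P - 1. w i + d * int i) = -1] (mod int P)"
    if "d \<in> {0..<int P} - affine_zeros P w" for d
  proof (rule prod_cong_minus_1_if_residues_covered[OF assms(1)],
      rule residues_covered_if_scalings_hit_0_or_minus_1[OF assms(1)])
    show "\<forall>i\<in>{1..P - 1}. \<not> int P dvd w i + d * int i"
      using that by (auto simp: affine_zeros_def cong_0_iff)
    show "\<forall>X. \<exists>i\<in>{1..P - 1}.
      [X * (w i + d * int i) = 0] (mod int P) \<or> [X * (w i + d * int i) = -1] (mod int P)"
    proof
      fix X
      have "X * (w i + d * int i) = X * w i + (X * d) * int i" for i
        by (simp add: algebra_simps)
      then show "\<exists>i\<in>{1..P - 1}.
        [X * (w i + d * int i) = 0] (mod int P) \<or> [X * (w i + d * int i) = -1] (mod int P)"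
        using no_avoiding by auto
    qed
  qed
  then have "[int (card (affine_zeros P w)) = 1] (mod int P)"
    by (rule card_affine_zeros_cong_1[OF assms(1)])
  moreover have "2 \<le> card (affine_zeros P w)"
    using two_le_card_affine_zeros[OF assms(1)] assms(2,3) by blast
  moreover have "card (affine_zeros P w) \<le> P"
    using card_mono[OF _ affine_zeros_subset[of P w]] by simp
  ultimately show False
    by (auto simp: cong_iff_dvd_diff dest: zdvd_imp_le)
qed

lemma dist_int_divide_ge:
  fixes a n r :: int
  assumes "0 < n" and far: "\<And>m. r \<le> \<bar>a - m * n\<bar>"
  shows "of_int r / of_int n \<le> dist_int (of_int a / of_int n)"
proof -
  define m where "m = round (of_int a / of_int n :: real)"
  have "dist_int (of_int a / of_int n) = of_int \<bar>a - m * n\<bar> / of_int n"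
    using assms(1) by (simp add: dist_int_def m_def field_simps)
  moreover have "of_int r \<le> (of_int \<bar>a - m * n\<bar> :: real)"
    using far[of m] by (simp only: of_int_le_iff)
  ultimately show ?thesis
    using assms(1) by (simp add: divide_right_mono)
qed

lemma dist_int_divide_ge_inverse:
  fixes a n :: int
  assumes "0 < n" "\<not> n dvd a"
  shows "1 / of_int n \<le> dist_int (of_int a / of_int n)"
proof -
  have "1 \<le> \<bar>a - m * n\<bar>" for m
  proof -
    have "a - m * n \<noteq> 0"
      using assms(2) by (metis dvd_triv_right eq_iff_diff_eq_0)
    then show ?thesis
      by linarith
  qed
  then show ?thesis
    using dist_int_divide_ge[OF assms(1), of 1 a] by simp
qed

lemma abs_mult_add_ge:
  fixes q G e :: int
  assumes "0 < e" "e < q" "G \<noteq> 0" "G \<noteq> -1"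
  shows "q \<le> \<bar>q * G + e\<bar>"
proof (cases "G \<ge> 1")
  case True
  then have "q * 1 \<le> q * G"
    using assms(1,2) by (intro mult_left_mono) auto
  then show ?thesis
    using assms(1) by linarith
next
  case False
  then have "q * G \<le> q * (-2)"
    using assms(1-4) by (intro mult_left_mono) auto
  then show ?thesis
    using assms(1,2) by linarith
qed

lemma exists_cong_in_1_to:
  fixes a n :: int
  assumes "0 < n"
  shows "\<exists>c. 1 \<le> c \<and> c \<le> n \<and> [c = a] (mod n)"
proof (intro exI conjI)
  show "1 \<le> (a - 1) mod n + 1" "(a - 1) mod n + 1 \<le> n"
    using assms by (simp_all add: pos_mod_bound add1_zle_eq)
  show "[(a - 1) mod n + 1 = a] (mod n)"
    by (simp add: cong_def mod_add_left_eq)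
qed

lemma exists_dilate_far_from_integers:
  fixes k p :: nat and u :: "nat \<Rightarrow> int" and X D :: int
  assumes "k^2 + k < p"
    and u: "\<forall>i\<in>{1..k}. [u i = int i] (mod int p)"
    and avoid: "\<forall>i\<in>{1..k}. \<not> [X * u i + D * int i = 0] (mod int (k + 1)) \<and>
      \<not> [X * u i + D * int i = -1] (mod int (k + 1))"
  shows "\<exists>t::real. \<forall>i\<in>{1..k}. dist_int (t * of_int (u i)) \<ge> 1 / (real k + 1)"
proof -
  define P where "P = int (k + 1)"
  have "0 < P"
    by (simp add: P_def)
  then obtain c where c: "1 \<le> c" "c \<le> P" "[c = - D * int p] (mod P)"
    using exists_cong_in_1_to by blast
  then have "P dvd c + D * int p"
    by (simp add: cong_iff_dvd_diff)
  have "(k + 1) * k < p"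
    using assms(1) by (simp add: power2_eq_square algebra_simps)
  then have p_big: "P * int k < int p"
    unfolding P_def by (simp only: of_nat_mult[symmetric] of_nat_less_iff)
  define t where "t = real_of_int ((X + D) * int p + c) / real_of_int (int p * P)"
  show ?thesis
  proof (intro exI[of _ t] ballI)
    fix i assume i: "i \<in> {1..k}"
    have "int p dvd u i - int i"
      using u i by (simp add: cong_iff_dvd_diff)
    then obtain q where q: "u i = int i + int p * q"
      by (metis dvdE diff_eq_eq add.commute)
    have "int p \<le> \<bar>((X + D) * int p + c) * u i - m * (int p * P)\<bar>" for m
    proof -
      define G where "G = (X + D) * u i + c * q - m * P"
      have "G - (X * u i + D * int i) = (c + D * int p) * q - m * P"
        unfolding G_def q by (simp add: algebra_simps)
      moreover have "P dvd (c + D * int p) * q - m * P"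
        using \<open>P dvd c + D * int p\<close> by (intro dvd_diff) (simp_all add: dvd_mult2)
      ultimately have "[G = X * u i + D * int i] (mod P)"
        by (simp add: cong_iff_dvd_diff)
      then have "\<not> [G = 0] (mod P) \<and> \<not> [G = -1] (mod P)"
        using avoid i unfolding P_def by (meson cong_sym cong_trans)
      then have "G \<noteq> 0" "G \<noteq> -1"
        by auto
      moreover have "0 < c * int i"
        using c i by simp
      moreover have "c * int i \<le> P * int k"
        using c i by (intro mult_mono) auto
      then have "c * int i < int p"
        using p_big by linarith
      ultimately have "int p \<le> \<bar>int p * G + c * int i\<bar>"
        by (intro abs_mult_add_ge)
      also have "int p * G + c * int i = ((X + D) * int p + c) * u i - m * (int p * P)"
        unfolding G_def q by (simp add: algebra_simps)
      finally show ?thesis .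
    qed
    moreover have "0 < int p * P"
      using assms(1) \<open>0 < P\<close> by simp
    ultimately have "of_int (int p) / of_int (int p * P)
        \<le> dist_int (of_int (((X + D) * int p + c) * u i) / of_int (int p * P))"
      by (intro dist_int_divide_ge)
    moreover have "of_int (((X + D) * int p + c) * u i) / of_int (int p * P) = t * of_int (u i)"
      unfolding t_def by simp
    moreover have "of_int (int p) / of_int (int p * P) = 1 / (real k + 1)"
      using assms(1) by (simp add: P_def)
    ultimately show "dist_int (t * of_int (u i)) \<ge> 1 / (real k + 1)"
      by simp
  qed
qed

theorem proposition1p2:
  fixes k p :: nat and u :: "nat \<Rightarrow> int"
  assumes "k > 0"
    and "prime (k + 1)" and "odd (k + 1)"
    and "prime p" and "odd p" and "p > k^2 + k"
    and "\<forall>i\<in>{1..k}. u i > 0"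
    and "Gcd (u ` {1..k}) = 1"
    and "\<forall>i\<in>{1..k}. [u i = int i] (mod int p)"
  shows "\<exists>t::real. \<forall>i\<in>{1..k}. dist_int (t * of_int (u i)) \<ge> 1 / (real k + 1)"
proof (cases "\<exists>i\<in>{1..k}. int (k + 1) dvd u i")
  case False
  have "1 / (real k + 1) \<le> dist_int (1 / (real k + 1) * of_int (u i))" if "i \<in> {1..k}" for i
    using dist_int_divide_ge_inverse[of "int (k + 1)" "u i"] False that by (simp add: add.commute)
  then show ?thesis
    by blast
next
  case True
  have "\<exists>j\<in>{1..k}. \<not> int (k + 1) dvd u j"
  proof (rule ccontr)
    assume "\<not> ?thesis"
    then have "int (k + 1) dvd Gcd (u ` {1..k})"
      by (intro Gcd_greatest) auto
    then show False
      using assms(1,8) by simp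
  qed
  then obtain X D where "\<forall>i\<in>{1..k}. \<not> [X * u i + D * int i = 0] (mod int (k + 1)) \<and>
      \<not> [X * u i + D * int i = -1] (mod int (k + 1))"
    using exists_affine_combination_avoiding_0_and_minus_1[OF assms(2), of u] True by auto
  then show ?thesis
    using exists_dilate_far_from_integers assms(6,9) by blast
qed

end
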